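(* Let $\Theta\subseteq\mathbb{R}^p$ be open and $\theta\mapsto|\psi_\theta\rangle$ a differentiable family of unit vectors in $\mathbb{C}^d$, with $\rho_\theta=|\psi_\theta\rangle\langle\psi_\theta|$, and let $\theta_0\in\Theta$. Then equality in the quantum Cramér–Rao inequality is attainable at $\theta_0$ (equivalently, Matsumoto's condition $\mathrm{Im}\langle l_j(\theta_0)|l_k(\theta_0)\rangle=0$ for all $j,k$ holds) if and only if $\mathrm{Im}\langle\psi^{(j)}_{\theta_0}|\psi^{(k)}_{\theta_0}\rangle=0$ for all $j,k$, where $|\psi^{(j)}_\theta\rangle=\partial|\psi_\theta\rangle/\partial\theta^j$.
   Context: For $j=1,\dots,p$ let $\lambda^j_\theta$ be a Hermitian solution of $\frac{\partial\rho_\theta}{\partial\theta^j}=\frac12(\rho_\theta\lambda^j_\theta+\lambda^j_\theta\rho_\theta)$ (symmetric logarithmic derivative), and $|l_j(\theta)\rangle=\lambda^j_\theta|\psi_\theta\rangle$ (independent of the choice of $\lambda^j_\theta$). The SLD quantum information is the matrix $(H_\theta)_{jk}=\mathrm{Re}\,\mathrm{tr}\{\lambda^j_\theta\rho_\theta\lambda^k_\theta\}$. The quantum Cramér–Rao inequality states that for a POVM with unbiased estimator $\hat\theta$, $E[(\hat\theta-\theta)(\hat\theta-\theta)^T]\ge H_\theta^{-1}$; by a theorem of Matsumoto, for pure-state families there exist a POVM and estimator achieving equality at $\theta_0$ if and only if $\mathrm{Im}\langle l_j(\theta_0)|l_k(\theta_0)\rangle=0$ for all $j,k$. *)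

theory Defs
  imports "HOL-Analysis.Analysis"
begin

definition cinner :: "complex^'d \<Rightarrow> complex^'d \<Rightarrow> complex" where
  "cinner u v = (\<Sum>i\<in>UNIV. cnj (u $ i) * v $ i)"

definition ketbra :: "complex^'d \<Rightarrow> complex^'d^'d" where
  "ketbra u = (\<chi> i k. u $ i * cnj (u $ k))"

definition adjoint :: "complex^'d^'d \<Rightarrow> complex^'d^'d" where
  "adjoint A = (\<chi> i k. cnj (A $ k $ i))"

definition hermitian :: "complex^'d^'d \<Rightarrow> bool" where
  "hermitian A \<longleftrightarrow> adjoint A = A"

definition partial_deriv :: "(real^'p \<Rightarrow> 'b::real_normed_vector) \<Rightarrow> real^'p \<Rightarrow> 'p \<Rightarrow> 'b" where
  "partial_deriv f x j = frechet_derivative f (at x) (axis j 1)"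

definition is_SLD :: "(real^'p \<Rightarrow> complex^'d^'d) \<Rightarrow> real^'p \<Rightarrow> 'p \<Rightarrow> complex^'d^'d \<Rightarrow> bool" where
  "is_SLD rho x j lam \<longleftrightarrow> hermitian lam \<and>
     partial_deriv rho x j = (1/2::real) *\<^sub>R (rho x ** lam + lam ** rho x)"

end

theory Submission imports Defs begin

text \<open>
  Write \<open>p = \<psi>(\<theta>\<^sub>0)\<close>, \<open>d\<^sub>j = \<partial>\<^sub>j\<psi>(\<theta>\<^sub>0)\<close> and \<open>s\<^sub>j = \<langle>p|d\<^sub>j\<rangle>\<close>. Since \<open>\<psi>\<close> stays on the unit
  sphere, \<open>s\<^sub>j\<close> is purely imaginary. Applying the SLD equation
  \<open>|d\<^sub>j\<rangle>\<langle>p| + |p\<rangle>\<langle>d\<^sub>j| = (\<rho>\<lambda>\<^sub>j + \<lambda>\<^sub>j\<rho>)/2\<close> to \<open>p\<close> determines \<open>\<lambda>\<^sub>jp\<close> completely: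
  \<open>l\<^sub>j = 2d\<^sub>j - 2s\<^sub>jp\<close>. Hence \<open>\<langle>l\<^sub>j|l\<^sub>k\<rangle> = 4(\<langle>d\<^sub>j|d\<^sub>k\<rangle> - s\<^sub>j\<^sup>* s\<^sub>k)\<close>, and \<open>s\<^sub>j\<^sup>* s\<^sub>k\<close> is real,
  so the imaginary parts vanish simultaneously.
\<close>

definition outer :: "complex^'d \<Rightarrow> complex^'d \<Rightarrow> complex^'d^'d" where
  "outer u w = (\<chi> i k. u $ i * cnj (w $ k))"

lemma ketbra_eq_outer: "ketbra u = outer u u"
  by (simp add: ketbra_def outer_def)

lemma bounded_bilinear_outer: "bounded_bilinear (outer :: complex^'d \<Rightarrow> _)"
proof -
  have "bilinear (outer :: complex^'d \<Rightarrow> _)"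
    unfolding bilinear_def linear_iff outer_def
    by (auto simp: vec_eq_iff vector_scaleR_component algebra_simps)
  then show ?thesis by (simp add: bilinear_conv_bounded_bilinear)
qed

lemma bounded_bilinear_cinner: "bounded_bilinear (cinner :: complex^'d \<Rightarrow> _)"
proof -
  have "bilinear (cinner :: complex^'d \<Rightarrow> _)"
    unfolding bilinear_def linear_iff cinner_def
    by (auto simp: vector_scaleR_component algebra_simps sum.distrib scaleR_sum_right)
  then show ?thesis by (simp add: bilinear_conv_bounded_bilinear)
qed

lemma cinner_self_eq_norm: "cinner u u = of_real ((norm u)\<^sup>2)"
proof -
  have "(norm u)\<^sup>2 = (\<Sum>i\<in>UNIV. (norm (u $ i))\<^sup>2)"
    unfolding norm_vec_def L2_set_def by (simp add: sum_nonneg)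
  then show ?thesis unfolding cinner_def
    by (simp add: of_real_sum complex_norm_square[unfolded of_real_power] mult.commute)
qed

lemma cinner_commute: "cinner u v = cnj (cinner v u)"
  unfolding cinner_def by (simp add: mult.commute)

lemma cinner_add_right: "cinner u (v + w) = cinner u v + cinner u w"
  unfolding cinner_def by (simp add: algebra_simps sum.distrib)

lemma cinner_diff_right: "cinner u (v - w) = cinner u v - cinner u w"
  unfolding cinner_def by (simp add: algebra_simps sum_subtractf)

lemma cinner_diff_left: "cinner (u - v) w = cinner u w - cinner v w"
  unfolding cinner_def by (simp add: algebra_simps sum_subtractf)

lemma cinner_smult_right: "cinner u (c *s v) = c * cinner u v"
  unfolding cinner_def by (simp add: sum_distrib_left algebra_simps)

lemma cinner_smult_left: "cinner (c *s u) v = cnj c * cinner u v"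
  unfolding cinner_def by (simp add: sum_distrib_left algebra_simps)

lemma outer_mult_vec: "outer u w *v v = cinner w v *s u"
  by (simp add: vec_eq_iff outer_def matrix_vector_mult_def cinner_def sum_distrib_left
      algebra_simps)

lemma partial_deriv_ketbra:
  assumes "\<psi> differentiable (at x)"
  shows "partial_deriv (\<lambda>y. ketbra (\<psi> y)) x j
    = outer (\<psi> x) (partial_deriv \<psi> x j) + outer (partial_deriv \<psi> x j) (\<psi> x)"
proof -
  let ?D = "frechet_derivative \<psi> (at x)"
  have \<psi>': "(\<psi> has_derivative ?D) (at x)"
    using assms by (simp add: frechet_derivative_works)
  have "((\<lambda>y. ketbra (\<psi> y)) has_derivative (\<lambda>h. outer (\<psi> x) (?D h) + outer (?D h) (\<psi> x)))
      (at x)"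
    unfolding ketbra_eq_outer by (rule bounded_bilinear.FDERIV[OF bounded_bilinear_outer \<psi>' \<psi>'])
  then show ?thesis
    unfolding partial_deriv_def by (simp add: frechet_derivative_at[symmetric])
qed

lemma Re_cinner_partial_deriv_unit:
  assumes "open S" "x \<in> S" "\<psi> differentiable (at x)" "\<And>y. y \<in> S \<Longrightarrow> norm (\<psi> y) = 1"
  shows "Re (cinner (\<psi> x) (partial_deriv \<psi> x j)) = 0"
proof -
  let ?D = "frechet_derivative \<psi> (at x)"
  have \<psi>': "(\<psi> has_derivative ?D) (at x)"
    using assms(3) by (simp add: frechet_derivative_works)
  have has_D: "((\<lambda>y. cinner (\<psi> y) (\<psi> y))
      has_derivative (\<lambda>h. cinner (\<psi> x) (?D h) + cinner (?D h) (\<psi> x))) (at x)"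
    by (rule bounded_bilinear.FDERIV[OF bounded_bilinear_cinner \<psi>' \<psi>'])
  have has_0: "((\<lambda>y. cinner (\<psi> y) (\<psi> y)) has_derivative (\<lambda>h. 0)) (at x)"
    by (rule has_derivative_transform_within_open[OF has_derivative_const assms(1,2)])
      (simp add: cinner_self_eq_norm assms(4))
  have "cinner (\<psi> x) (?D h) + cinner (?D h) (\<psi> x) = 0" for h
    using has_derivative_unique[OF has_D has_0] by meson
  then have "cinner (\<psi> x) (partial_deriv \<psi> x j) + cnj (cinner (\<psi> x) (partial_deriv \<psi> x j)) = 0"
    unfolding partial_deriv_def by (metis cinner_commute)
  then show ?thesis
    by (metis complex_add_cnj mult_eq_0_iff of_real_eq_0_iff zero_neq_numeral)
qed

lemma scaleR_matrix_vector_mult: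
  fixes A :: "'a::real_algebra_1^'n^'m"
  shows "(r *\<^sub>R A) *v v = r *\<^sub>R (A *v v)"
  by (simp add: vec_eq_iff matrix_vector_mult_def scaleR_sum_right)

text \<open>The SLD is not unique, but its action on the pure state is.\<close>

lemma SLD_mult_pure_state:
  fixes p d :: "complex^'d" and L :: "complex^'d^'d"
  assumes unit: "cinner p p = 1" and tangent: "Re (cinner p d) = 0"
    and SLD: "outer p d + outer d p = (1/2::real) *\<^sub>R (outer p p ** L + L ** outer p p)"
  shows "L *v p = 2 *s d - (2 * cinner p d) *s p"
proof -
  define s where "s = cinner p d"
  define l where "l = L *v p"
  define c where "c = cinner p l"
  have "(outer p d + outer d p) *v p = (1/2::real) *\<^sub>R ((outer p p ** L + L ** outer p p) *v p)"
    using SLD by (simp add: scaleR_matrix_vector_mult)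
  then have "cnj s *s p + d = (1/2::real) *\<^sub>R (c *s p + l)"
    by (simp add: algebra_simps outer_mult_vec unit s_def c_def l_def cinner_commute[of d p]
        flip: matrix_vector_mul_assoc)
  then have "cnj s * p $ i + d $ i = (1/2::real) *\<^sub>R (c * p $ i + l $ i)" for i
    by (simp only: vec_eq_iff vector_add_component vector_scaleR_component vector_smult_component)
  then have "l $ i = 2 * d $ i + (2 * cnj s - c) * p $ i" for i
    by (simp add: scaleR_conv_of_real field_simps)
  then have l_eq: "l = 2 *s d + (2 * cnj s - c) *s p"
    by (simp add: vec_eq_iff left_diff_distrib)
  have "c = cinner p (2 *s d + (2 * cnj s - c) *s p)"
    using c_def l_eq by metis
  also have "\<dots> = 2 * s + 2 * cnj s - c"
    by (simp add: cinner_add_right cinner_diff_right cinner_smult_right unit s_def algebra_simps)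
  finally have "2 * c = 2 * (s + cnj s)" by (simp add: algebra_simps)
  also have "\<dots> = 0" using tangent complex_add_cnj s_def by simp
  finally have "c = 0" by simp
  moreover have "cnj s = - s" using tangent by (simp add: s_def complex_eq_iff)
  ultimately show ?thesis by (simp add: l_def[symmetric] l_eq s_def vector_sadd_rdistrib)
qed

lemma Im_cinner_tangent_projections:
  fixes p d e :: "complex^'d"
  assumes unit: "cinner p p = 1" and "Re (cinner p d) = 0" and "Re (cinner p e) = 0"
  shows "Im (cinner (2 *s d - (2 * cinner p d) *s p) (2 *s e - (2 * cinner p e) *s p))
    = 4 * Im (cinner d e)"
proof -
  have "cinner (2 *s d - (2 * cinner p d) *s p) (2 *s e - (2 * cinner p e) *s p)
      = 4 * cinner d e - 4 * cnj (cinner p d) * cinner p e"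
    by (simp add: cinner_diff_left cinner_diff_right cinner_smult_left cinner_smult_right
        cinner_commute[of d p] unit algebra_simps)
  then show ?thesis using assms(2,3) by simp
qed

theorem lemma4p1:
  fixes Th :: "(real^'p) set"
    and \<psi> :: "real^'p \<Rightarrow> complex^'d"
    and \<theta>0 :: "real^'p"
    and lam :: "'p \<Rightarrow> complex^'d^'d"
  assumes "open Th"
    and "\<And>\<theta>. \<theta> \<in> Th \<Longrightarrow> \<psi> differentiable (at \<theta>)"
    and "\<And>\<theta>. \<theta> \<in> Th \<Longrightarrow> norm (\<psi> \<theta>) = 1"
    and "\<theta>0 \<in> Th"
    and "\<And>j. is_SLD (\<lambda>\<theta>. ketbra (\<psi> \<theta>)) \<theta>0 j (lam j)"
  shows "(\<forall>j k. Im (cinner (lam j *v \<psi> \<theta>0) (lam k *v \<psi> \<theta>0)) = 0)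
     \<longleftrightarrow> (\<forall>j k. Im (cinner (partial_deriv \<psi> \<theta>0 j) (partial_deriv \<psi> \<theta>0 k)) = 0)"
proof -
  define p where "p = \<psi> \<theta>0"
  define d where "d j = partial_deriv \<psi> \<theta>0 j" for j
  have unit: "cinner p p = 1"
    using assms(3,4) by (simp add: p_def cinner_self_eq_norm)
  have tangent: "Re (cinner p (d j)) = 0" for j
    unfolding p_def d_def using Re_cinner_partial_deriv_unit assms(1-4) by blast
  have "outer p (d j) + outer (d j) p = (1/2::real) *\<^sub>R (outer p p ** lam j + lam j ** outer p p)"
    for j
    using assms(5)[of j] partial_deriv_ketbra[OF assms(2)[OF assms(4)]]
    by (simp add: is_SLD_def p_def d_def ketbra_eq_outer)
  then have action: "lam j *v p = 2 *s d j - (2 * cinner p (d j)) *s p" for j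
    using SLD_mult_pure_state unit tangent by blast
  have "Im (cinner (lam j *v p) (lam k *v p)) = 4 * Im (cinner (d j) (d k))" for j k
    unfolding action by (rule Im_cinner_tangent_projections[OF unit tangent tangent])
  then show ?thesis by (simp add: p_def d_def)
qed

end
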